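(* Let $\Omega\subseteq\mathbb{R}^d$ be a convex compact set, and for $t\in\mathbb{R}$ let $\Omega_t=\{x\in\mathbb{R}^{d-1}:(x,t)\in\Omega\}$. Let $\eta>\max_{t\in\mathbb{R}}|\Omega_t|$ and let $\Lambda\subseteq\mathbb{R}^{d-1}$ be an $\eta$-universal sampling set. Then there exist $0<A\le B<\infty$ such that for every $t\in\mathbb{R}$, $\Lambda$ is a set of stable sampling for $\mathcal{B}_{\Omega_t}$ with bounds $A,B$.
   Context: $|\Omega_t|$ is $(d-1)$-dimensional Lebesgue measure. Fourier transform on $\mathbb{R}^n$: $\widehat f(\omega)=\int f(r)e^{-2\pi i\langle\omega,r\rangle}dr$; for closed $S\subseteq\mathbb{R}^n$, $\mathcal{B}_S=\{f\in L^2(\mathbb{R}^n):\widehat f=0\text{ a.e. outside }S\}$. $\Lambda$ is a set of stable sampling for $\mathcal{B}_S$ with bounds $A,B$ if $A\|f\|_2^2\le\sum_{\lambda\in\Lambda}|f(\lambda)|^2\le B\|f\|_2^2$ for all $f\in\mathcal{B}_S$. Beurling densities of $\Lambda\subseteq\mathbb{R}^n$: $D^-(\Lambda)=\liminf_{a\to\infty}\inf_x\#(\Lambda\cap B_a^n(x))/|B_a^n|$, $D^+(\Lambda)=\limsup_{a\to\infty}\sup_x\#(\Lambda\cap B_a^n(x))/|B_a^n|$. Given $\eta>0$, an $\eta$-universal sampling set in $\mathbb{R}^n$ is a set $\Lambda$ with uniform density $D^-(\Lambda)=D^+(\Lambda)=\eta$ that is a set of stable sampling for $\mathcal{B}_S$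 for every compact $S\subseteq\mathbb{R}^n$ with $|S|<\eta$ (the bounds may depend on $S$). *)

theory Defs
  imports "HOL-Analysis.Analysis"
begin

definition L2 :: "('a::euclidean_space \<Rightarrow> complex) \<Rightarrow> bool" where
  "L2 f \<longleftrightarrow> f \<in> borel_measurable lebesgue \<and>
     integrable lebesgue (\<lambda>x. (cmod (f x))\<^sup>2)"

definition L2_norm_sq :: "('a::euclidean_space \<Rightarrow> complex) \<Rightarrow> real" where
  "L2_norm_sq f = integral\<^sup>L lebesgue (\<lambda>x. (cmod (f x))\<^sup>2)"

definition fourier_int :: "('a::euclidean_space \<Rightarrow> complex) \<Rightarrow> 'a \<Rightarrow> complex" where
  "fourier_int h w = integral\<^sup>L lebesgue (\<lambda>r. h r * cis (- 2 * pi * (w \<bullet> r)))"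

definition is_fourier_L2 :: "('a::euclidean_space \<Rightarrow> complex) \<Rightarrow> ('a \<Rightarrow> complex) \<Rightarrow> bool" where
  "is_fourier_L2 f g \<longleftrightarrow> L2 g \<and>
     ((\<lambda>R::real. \<integral>\<^sup>+ w. ennreal ((cmod (g w -
         fourier_int (\<lambda>r. f r * indicator (ball 0 R) r) w))\<^sup>2) \<partial>lebesgue)
       \<longlongrightarrow> 0) at_top"

text \<open>Paley--Wiener space B_S. Elements are L2 classes; since point values are
  sampled, each class is represented by its continuous representative (which
  exists for compact S).\<close>
definition PW_space :: "'a::euclidean_space set \<Rightarrow> ('a \<Rightarrow> complex) set" where
  "PW_space S = {f. L2 f \<and> continuous_on UNIV f \<and>
     (\<exists>g. is_fourier_L2 f g \<and> (AE w in lebesgue. w \<notin> S \<longrightarrow> g w = 0))}"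

definition sample_energy :: "'a set \<Rightarrow> ('a \<Rightarrow> complex) \<Rightarrow> ennreal" where
  "sample_energy \<Lambda> f = (\<integral>\<^sup>+ l. ennreal ((cmod (f l))\<^sup>2) \<partial>count_space \<Lambda>)"

definition stable_sampling_bounds ::
  "'a::euclidean_space set \<Rightarrow> 'a set \<Rightarrow> real \<Rightarrow> real \<Rightarrow> bool" where
  "stable_sampling_bounds \<Lambda> S A B \<longleftrightarrow>
     (\<forall>f \<in> PW_space S.
        ennreal (A * L2_norm_sq f) \<le> sample_energy \<Lambda> f \<and>
        sample_energy \<Lambda> f \<le> ennreal (B * L2_norm_sq f))"

definition stable_sampling :: "'a::euclidean_space set \<Rightarrow> 'a set \<Rightarrow> bool" where
  "stable_sampling \<Lambda> S \<longleftrightarrow> (\<exists>A B. 0 < A \<and> A \<le> B \<and> stable_sampling_bounds \<Lambda> S A B)"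

definition npts :: "'a::euclidean_space set \<Rightarrow> 'a \<Rightarrow> real \<Rightarrow> ereal" where
  "npts \<Lambda> x a = (if finite (\<Lambda> \<inter> ball x a) then ereal (real (card (\<Lambda> \<inter> ball x a))) else \<infinity>)"

definition lower_density :: "'a::euclidean_space set \<Rightarrow> ereal" where
  "lower_density \<Lambda> = Liminf at_top
     (\<lambda>a::real. INF x. npts \<Lambda> x a / ereal (measure lebesgue (ball (0::'a) a)))"

definition upper_density :: "'a::euclidean_space set \<Rightarrow> ereal" where
  "upper_density \<Lambda> = Limsup at_top
     (\<lambda>a::real. SUP x. npts \<Lambda> x a / ereal (measure lebesgue (ball (0::'a) a)))"

definition universal_sampling :: "real \<Rightarrow> 'a::euclidean_space set \<Rightarrow> bool" where
  "universal_sampling \<eta> \<Lambda> \<longleftrightarrow>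
     lower_density \<Lambda> = ereal \<eta> \<and> upper_density \<Lambda> = ereal \<eta> \<and>
     (\<forall>S. compact S \<and> measure lebesgue S < \<eta> \<longrightarrow> stable_sampling \<Lambda> S)"

definition hsection :: "('a \<times> real) set \<Rightarrow> real \<Rightarrow> 'a set" where
  "hsection \<Omega> t = {x. (x, t) \<in> \<Omega>}"

end

theory Submission
  imports Defs
begin

text \<open>Sections of a compact set are upper semicontinuous: for s near t, every section
  \<open>\<Omega>\<^sub>s\<close> lies in an arbitrarily thin neighbourhood of \<open>\<Omega>\<^sub>t\<close>. A compact set
  \<open>K\<close> with \<open>|K| < \<eta>\<close> has a closed neighbourhood still of measure \<open>< \<eta>\<close>,
  so near each t all sections sit inside one compact set to which universal sampling
  applies. Stable sampling bounds pass to subsets, and finitely many neighbourhoods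
  cover the compact projection of \<open>\<Omega>\<close>; the extreme bounds among them work for all t.\<close>

lemma PW_space_mono: "S \<subseteq> T \<Longrightarrow> PW_space S \<subseteq> PW_space T"
  unfolding PW_space_def by (auto elim!: eventually_mono)

lemma stable_sampling_bounds_mono:
  assumes "stable_sampling_bounds \<Lambda> T A B" "S \<subseteq> T" "0 \<le> A'" "A' \<le> A" "B \<le> B'"
  shows "stable_sampling_bounds \<Lambda> S A' B'"
  unfolding stable_sampling_bounds_def
proof
  fix f assume "f \<in> PW_space S"
  with PW_space_mono[OF assms(2)] assms(1)
  have "ennreal (A * L2_norm_sq f) \<le> sample_energy \<Lambda> f"
    "sample_energy \<Lambda> f \<le> ennreal (B * L2_norm_sq f)"
    unfolding stable_sampling_bounds_def by auto
  moreover have "0 \<le> L2_norm_sq f"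
    unfolding L2_norm_sq_def by simp
  ultimately show "ennreal (A' * L2_norm_sq f) \<le> sample_energy \<Lambda> f \<and>
      sample_energy \<Lambda> f \<le> ennreal (B' * L2_norm_sq f)"
    using assms(4,5) by (meson ennreal_leI mult_right_mono order_trans)
qed

lemma hsection_subset_fst_image: "hsection \<Omega> t \<subseteq> fst ` \<Omega>"
  unfolding hsection_def by force

lemma hsection_eq_empty: "t \<notin> snd ` \<Omega> \<Longrightarrow> hsection \<Omega> t = {}"
  unfolding hsection_def by force

lemma compact_hsection:
  fixes \<Omega> :: "('a::t2_space \<times> real) set"
  assumes "compact \<Omega>"
  shows "compact (hsection \<Omega> t)"
proof -
  have "hsection \<Omega> t = fst ` (\<Omega> \<inter> {p. snd p = t})"
    unfolding hsection_def by (auto intro: rev_image_eqI)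
  moreover have "closed {p::'a \<times> real. snd p = t}"
    by (intro closed_Collect_eq continuous_intros)
  then have "compact (\<Omega> \<inter> {p. snd p = t})"
    using assms by (rule compact_Int_closed[rotated])
  ultimately show ?thesis
    using compact_continuous_image[OF continuous_on_fst[OF continuous_on_id]] by simp
qed

lemma bdd_above_measure_hsection:
  fixes \<Omega> :: "('a::euclidean_space \<times> real) set"
  assumes "compact \<Omega>"
  shows "bdd_above (range (\<lambda>t. measure lebesgue (hsection \<Omega> t)))"
proof (rule bdd_aboveI)
  fix m assume "m \<in> range (\<lambda>t. measure lebesgue (hsection \<Omega> t))"
  then obtain t where "m = measure lebesgue (hsection \<Omega> t)" by blast
  moreover have "compact (fst ` \<Omega>)"
    using assms by (intro compact_continuous_image continuous_intros)
  ultimately show "m \<le> measure lebesgue (fst ` \<Omega>)"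
    using assms hsection_subset_fst_image
    by (metis lmeasurable_compact compact_hsection fmeasurableD measure_mono_fmeasurable)
qed

lemma hsection_eventually_near:
  fixes \<Omega> :: "('a::metric_space \<times> real) set"
  assumes "compact \<Omega>" "0 < e"
  shows "\<forall>\<^sub>F s in nhds t. \<forall>x \<in> hsection \<Omega> s. infdist x (hsection \<Omega> t) < e"
proof -
  define C where "C = \<Omega> \<inter> {p. e \<le> infdist (fst p) (hsection \<Omega> t)}"
  have "compact C"
    unfolding C_def using assms(1)
    by (intro compact_Int_closed closed_Collect_le continuous_intros)
  then have "open (- snd ` C)"
    by (intro open_Compl compact_imp_closed compact_continuous_image continuous_intros)
  moreover have "t \<in> - snd ` C"
    using assms(2) unfolding C_def hsection_def by force
  moreover have "\<forall>x \<in> hsection \<Omega> s. infdist x (hsection \<Omega> t) < e" if "s \<in> - snd ` C" for s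
    using that unfolding C_def hsection_def by force
  ultimately show ?thesis
    unfolding eventually_nhds by blast
qed

lemma Inter_infdist_le_eq:
  fixes K :: "'a::metric_space set"
  assumes "closed K" "K \<noteq> {}"
  shows "(\<Inter>n. {x. infdist x K \<le> 1 / (real n + 1)}) = K"
proof
  show "(\<Inter>n. {x. infdist x K \<le> 1 / (real n + 1)}) \<subseteq> K"
  proof
    fix x assume x: "x \<in> (\<Inter>n. {x. infdist x K \<le> 1 / (real n + 1)})"
    have "infdist x K \<le> 0"
    proof (rule field_le_epsilon)
      fix e :: real assume "0 < e"
      then obtain n :: nat where "1 / (real n + 1) < e"
        by (metis reals_Archimedean inverse_eq_divide of_nat_Suc add.commute)
      moreover have "infdist x K \<le> 1 / (real n + 1)"
        using x by blast
      ultimately show "infdist x K \<le> 0 + e" by simp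
    qed
    then show "x \<in> K"
      using assms infdist_nonneg[of x K] by (simp add: in_closed_iff_infdist_zero)
  qed
qed auto

lemma exists_infdist_le_measure_less:
  fixes K :: "'a::euclidean_space set"
  assumes "compact K" "K \<noteq> {}" "measure lebesgue K < \<eta>"
  shows "\<exists>e>0. measure lebesgue {x. infdist x K \<le> e} < \<eta>"
proof -
  define N where "N n = {x. infdist x K \<le> 1 / (real n + 1)}" for n
  have N_compact: "compact (N n)" for n
    unfolding N_def using assms by (intro compact_infdist_le) auto
  have "N (Suc n) \<subseteq> N n" for n
  proof -
    have "1 / (real (Suc n) + 1) \<le> 1 / (real n + 1)"
      by (intro divide_left_mono) auto
    then show ?thesis
      unfolding N_def by (auto simp del: of_nat_Suc)
  qed
  then have "decseq N"
    by (rule decseq_SucI)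
  moreover have N_finite: "N n \<in> lmeasurable" for n
    using N_compact by (rule lmeasurable_compact)
  ultimately have "(\<lambda>n. measure lebesgue (N n)) \<longlonglongrightarrow> measure lebesgue (\<Inter>n. N n)"
    by (intro Lim_measure_decseq)
      (blast dest: fmeasurableD, assumption, metis fmeasurableD2 infinity_ennreal_def)
  also have "(\<Inter>n. N n) = K"
    unfolding N_def using assms by (simp add: Inter_infdist_le_eq compact_imp_closed)
  finally obtain n where "measure lebesgue (N n) < \<eta>"
    using assms(3) by (metis order_tendstoD(2) eventually_sequentially order_refl)
  then show ?thesis
    unfolding N_def by (intro exI[of _ "1 / (real n + 1)"]) auto
qed

lemma stable_sampling_bounds_eventually_hsection:
  fixes \<Omega> :: "('a::euclidean_space \<times> real) set"
  assumes "compact \<Omega>" "t \<in> snd ` \<Omega>" "measure lebesgue (hsection \<Omega> t) < \<eta>"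
    and "\<And>S. compact S \<Longrightarrow> measure lebesgue S < \<eta> \<Longrightarrow> stable_sampling \<Lambda> S"
  shows "\<exists>A B. 0 < A \<and> A \<le> B \<and>
           (\<forall>\<^sub>F s in nhds t. stable_sampling_bounds \<Lambda> (hsection \<Omega> s) A B)"
proof -
  have "hsection \<Omega> t \<noteq> {}"
    using assms(2) unfolding hsection_def by force
  then obtain e where e: "0 < e" and
    K_measure: "measure lebesgue {x. infdist x (hsection \<Omega> t) \<le> e} < \<eta>"
    using exists_infdist_le_measure_less assms(1,3) compact_hsection by blast
  with assms(1) have "compact {x. infdist x (hsection \<Omega> t) \<le> e}"
    using \<open>hsection \<Omega> t \<noteq> {}\<close> by (intro compact_infdist_le compact_hsection)
  with K_measure assms(4) obtain A B where AB: "0 < A" "A \<le> B"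
    "stable_sampling_bounds \<Lambda> {x. infdist x (hsection \<Omega> t) \<le> e} A B"
    unfolding stable_sampling_def by blast
  have "\<forall>\<^sub>F s in nhds t. hsection \<Omega> s \<subseteq> {x. infdist x (hsection \<Omega> t) \<le> e}"
    using hsection_eventually_near[OF assms(1) e, of t] by eventually_elim force
  then have "\<forall>\<^sub>F s in nhds t. stable_sampling_bounds \<Lambda> (hsection \<Omega> s) A B"
    by eventually_elim (use AB in \<open>auto intro: stable_sampling_bounds_mono\<close>)
  with AB show ?thesis by blast
qed

lemma stable_sampling_bounds_uniform_on_compact:
  assumes "compact C"
    and "\<And>t. t \<in> C \<Longrightarrow> \<exists>A B. 0 < A \<and> A \<le> B \<and>
           (\<forall>\<^sub>F s in nhds t. stable_sampling_bounds \<Lambda> (F s) A B)"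
  shows "\<exists>A B. 0 < A \<and> A \<le> B \<and> (\<forall>s \<in> C. stable_sampling_bounds \<Lambda> (F s) A B)"
proof -
  obtain a b where ab: "\<And>t. t \<in> C \<Longrightarrow> 0 < a t \<and> a t \<le> b t \<and>
      (\<forall>\<^sub>F s in nhds t. stable_sampling_bounds \<Lambda> (F s) (a t) (b t))"
    using assms(2) by metis
  have "\<forall>t\<in>C. \<exists>U. open U \<and> t \<in> U \<and> (\<forall>s \<in> U. stable_sampling_bounds \<Lambda> (F s) (a t) (b t))"
    using ab unfolding eventually_nhds by simp
  then obtain U where U: "\<And>t. t \<in> C \<Longrightarrow> open (U t) \<and> t \<in> U t \<and>
      (\<forall>s \<in> U t. stable_sampling_bounds \<Lambda> (F s) (a t) (b t))"
    by (metis (no_types))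
  obtain T where T: "T \<subseteq> C" "finite T" "C \<subseteq> (\<Union>t \<in> T. U t)"
    using compactE_image[OF assms(1), of C U] U by blast
  define A where "A = Min (insert 1 (a ` T))"
  define B where "B = Max (insert 1 (b ` T))"
  have "0 < A"
    unfolding A_def using T ab by (subst Min_gr_iff) auto
  moreover have "A \<le> 1" "1 \<le> B"
    unfolding A_def B_def using T(2) by auto
  moreover have "stable_sampling_bounds \<Lambda> (F s) A B" if "s \<in> C" for s
  proof -
    obtain t where t: "t \<in> T" "s \<in> U t"
      using T(3) \<open>s \<in> C\<close> by blast
    then have "stable_sampling_bounds \<Lambda> (F s) (a t) (b t)"
      using U T(1) by blast
    moreover have "A \<le> a t"
      unfolding A_def using T(2) t(1) by (intro Min_le) auto
    moreover have "b t \<le> B"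
      unfolding B_def using T(2) t(1) by (intro Max_ge) auto
    ultimately show ?thesis
      using stable_sampling_bounds_mono less_imp_le[OF \<open>0 < A\<close>] by blast
  qed
  ultimately show ?thesis
    by (meson order_trans)
qed

lemma stable_sampling_bounds_hsection_uniform:
  fixes \<Omega> :: "('a::euclidean_space \<times> real) set"
  assumes "compact \<Omega>" and section_small: "\<And>t. measure lebesgue (hsection \<Omega> t) < \<eta>"
    and universal: "\<And>S. compact S \<Longrightarrow> measure lebesgue S < \<eta> \<Longrightarrow> stable_sampling \<Lambda> S"
  shows "\<exists>A B. 0 < A \<and> A \<le> B \<and> (\<forall>t. stable_sampling_bounds \<Lambda> (hsection \<Omega> t) A B)"
proof -
  have "measure lebesgue ({} :: 'a set) < \<eta>"
    using section_small by (metis measure_empty measure_nonneg le_less_trans)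
  then have "stable_sampling \<Lambda> {}"
    by (intro universal compact_empty)
  then obtain A\<^sub>0 B\<^sub>0 where AB\<^sub>0: "0 < A\<^sub>0" "A\<^sub>0 \<le> B\<^sub>0" "stable_sampling_bounds \<Lambda> {} A\<^sub>0 B\<^sub>0"
    unfolding stable_sampling_def by blast
  have "compact (snd ` \<Omega>)"
    using assms(1) by (intro compact_continuous_image continuous_intros)
  then have "\<exists>A B. 0 < A \<and> A \<le> B \<and>
      (\<forall>t \<in> snd ` \<Omega>. stable_sampling_bounds \<Lambda> (hsection \<Omega> t) A B)"
    by (rule stable_sampling_bounds_uniform_on_compact)
      (rule stable_sampling_bounds_eventually_hsection[OF assms(1) _ section_small universal])
  then obtain A B where AB: "0 < A" "A \<le> B"
    "\<forall>t \<in> snd ` \<Omega>. stable_sampling_bounds \<Lambda> (hsection \<Omega> t) A B"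
    by blast
  have "stable_sampling_bounds \<Lambda> (hsection \<Omega> t) (min A A\<^sub>0) (max B B\<^sub>0)" for t
  proof (cases "t \<in> snd ` \<Omega>")
    case True
    show ?thesis
      by (rule stable_sampling_bounds_mono[OF AB(3)[rule_format, OF True] order.refl])
        (use AB AB\<^sub>0 in auto)
  next
    case False
    show ?thesis
      by (rule stable_sampling_bounds_mono[OF AB\<^sub>0(3)])
        (use AB AB\<^sub>0 False in \<open>auto simp: hsection_eq_empty\<close>)
  qed
  moreover have "0 < min A A\<^sub>0" "min A A\<^sub>0 \<le> max B B\<^sub>0"
    using AB AB\<^sub>0 by auto
  ultimately show ?thesis by blast
qed

theorem proposition3p10:
  fixes \<Omega> :: "((real ^ 'n) \<times> real) set" and \<eta> :: real and \<Lambda> :: "(real ^ 'n) set"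
  assumes "convex \<Omega>" and "compact \<Omega>"
    and "\<eta> > (SUP t. measure lebesgue (hsection \<Omega> t))"
    and "universal_sampling \<eta> \<Lambda>"
  shows "\<exists>A B. 0 < A \<and> A \<le> B \<and> (\<forall>t. stable_sampling_bounds \<Lambda> (hsection \<Omega> t) A B)"
proof (rule stable_sampling_bounds_hsection_uniform[OF assms(2)])
  show "measure lebesgue (hsection \<Omega> t) < \<eta>" for t
    using cSUP_upper[OF UNIV_I bdd_above_measure_hsection[OF assms(2)]] assms(3)
    by (meson le_less_trans)
  show "stable_sampling \<Lambda> S" if "compact S" "measure lebesgue S < \<eta>" for S
    using assms(4) that unfolding universal_sampling_def by blast
qed

end
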